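(* Let $Q\succeq0$, $q\in\mathbb{R}^n$, $A\succ0$, $v\in\mathbb{R}^n$, and let $m>0$ satisfy Requirement 2 (see context). Let $k\in\mathbb{N}$ and $0<\gamma_k\le 1/L_k$. If $x_k\in\mathcal{C}$, then $x_{k+1}:=x_k-\gamma_k\nabla J_k(x_k)\in\mathcal{C}$. That is, $\mathcal{C}$ is positively invariant under the gradient step.
   Context: $Q\in\mathbb{R}^{n\times n}$ symmetric positive semidefinite, $A\in\mathbb{R}^{n\times n}$ symmetric positive definite. $f(x)=\tfrac12 x^\top Qx+q^\top x$, $g(x)=(x-v)^\top A(x-v)$, $\mathcal{C}=\{x:g(x)\le1\}$, $\partial\mathcal{C}=\{x:g(x)=1\}$, $J_k(x)=f(x)+\frac{m}{k}g(x)^k$ for $k\in\mathbb{N}=\{1,2,\dots\}$, $L_k=\bar\sigma(Q+m(4k-2)A)$ (in particular $L_1=\bar\sigma(Q+2mA)$), where $\bar\sigma,\underline\sigma$ denote largest/smallest singular value. Let $r=\sqrt{\underline\sigma(A)}/\bar\sigma(A)$. Requirement 2: with $w(x)=\nabla f(x)+m\nabla g(x)$, for every $x\in\partial\mathcal{C}$ one has $\|w(x)\|\le 2rL_1\cos\phi(x)$, where $\cos\phi(x)=\frac{\langle w(x),\nabla g(x)\rangle}{\|w(x)\|\,\|\nabla g(x)\|}$ (equivalently, $\|w(x)\|^2\|\nabla g(x)\|\le 2rL_1\langle w(x),\nabla g(x)\rangle$ for all $x\in\partial\mathcal{C}$, which also covers $w(x)=0$). (The paper phrases this as $m\ge m_{\mathrm{inv}}$,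 the smallest $m\ge0$ satisfying this condition.) Requirement 2 implies $\langle\nabla g(x),w(x)\rangle\ge0$ on $\partial\mathcal{C}$. *)

theory Defs
  imports "HOL-Analysis.Analysis"
begin

definition mat_eigenvalues :: "real^'n^'n \<Rightarrow> real set" where
  "mat_eigenvalues M = {l. \<exists>x. x \<noteq> 0 \<and> M *v x = l *\<^sub>R x}"

definition sigma_max :: "real^'n^'n \<Rightarrow> real" where
  "sigma_max M = sqrt (Max (mat_eigenvalues (transpose M ** M)))"

definition sigma_min :: "real^'n^'n \<Rightarrow> real" where
  "sigma_min M = sqrt (Min (mat_eigenvalues (transpose M ** M)))"

definition sym_psd :: "real^'n^'n \<Rightarrow> bool" where
  "sym_psd M \<longleftrightarrow> transpose M = M \<and> (\<forall>x. 0 \<le> x \<bullet> (M *v x))"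

definition sym_pd :: "real^'n^'n \<Rightarrow> bool" where
  "sym_pd M \<longleftrightarrow> transpose M = M \<and> (\<forall>x. x \<noteq> 0 \<longrightarrow> 0 < x \<bullet> (M *v x))"

definition fobj :: "real^'n^'n \<Rightarrow> real^'n \<Rightarrow> real^'n \<Rightarrow> real" where
  "fobj Q q x = (1/2) * (x \<bullet> (Q *v x)) + q \<bullet> x"

definition gcon :: "real^'n^'n \<Rightarrow> real^'n \<Rightarrow> real^'n \<Rightarrow> real" where
  "gcon A v x = (x - v) \<bullet> (A *v (x - v))"

definition grad_f :: "real^'n^'n \<Rightarrow> real^'n \<Rightarrow> real^'n \<Rightarrow> real^'n" where
  "grad_f Q q x = Q *v x + q"

definition grad_g :: "real^'n^'n \<Rightarrow> real^'n \<Rightarrow> real^'n \<Rightarrow> real^'n" where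
  "grad_g A v x = 2 *\<^sub>R (A *v (x - v))"

definition Jk :: "real^'n^'n \<Rightarrow> real^'n \<Rightarrow> real^'n^'n \<Rightarrow> real^'n \<Rightarrow> real \<Rightarrow> nat \<Rightarrow> real^'n \<Rightarrow> real" where
  "Jk Q q A v m k x = fobj Q q x + (m / real k) * (gcon A v x) ^ k"

definition grad_Jk :: "real^'n^'n \<Rightarrow> real^'n \<Rightarrow> real^'n^'n \<Rightarrow> real^'n \<Rightarrow> real \<Rightarrow> nat \<Rightarrow> real^'n \<Rightarrow> real^'n" where
  "grad_Jk Q q A v m k x = grad_f Q q x + (m * (gcon A v x) ^ (k - 1)) *\<^sub>R grad_g A v x"

definition Lk :: "real^'n^'n \<Rightarrow> real^'n^'n \<Rightarrow> real \<Rightarrow> nat \<Rightarrow> real" where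
  "Lk Q A m k = sigma_max (Q + (m * (4 * real k - 2)) *\<^sub>R A)"

definition rA :: "real^'n^'n \<Rightarrow> real" where
  "rA A = sqrt (sigma_min A) / sigma_max A"

text \<open>Requirement 2, in the form covering w(x) = 0.\<close>

definition requirement2 :: "real^'n^'n \<Rightarrow> real^'n \<Rightarrow> real^'n^'n \<Rightarrow> real^'n \<Rightarrow> real \<Rightarrow> bool" where
  "requirement2 Q q A v m \<longleftrightarrow>
     (\<forall>x. gcon A v x = 1 \<longrightarrow>
        (let w = grad_f Q q x + m *\<^sub>R grad_g A v x in
           (norm w)\<^sup>2 * norm (grad_g A v x) \<le> 2 * rA A * Lk Q A m 1 * (w \<bullet> grad_g A v x)))"

end

theory Submission
  imports Defs
begin

(* On the boundary g = 1 the penalty gradient m g^(k-1) grad g equals m grad g for every k, so the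
   step is x - gamma w with w = grad f + m grad g, and g(x - gamma w) = 1 - gamma <w, grad g> + gamma^2 w'Aw.
   Requirement 2, with |grad g| >= 2 sqrt(sigma_min A) on the boundary and gamma L_1 <= gamma L_k <= 1,
   gives gamma w'Aw <= <w, grad g>, so the step stays in the ellipsoid.

   An interior point x is compared with a boundary point.  Let T be the step map, u = T x - v, z = A u,
   and let p = x + h z be the first boundary point on the ray from x in direction z.  Along the segment
   g <= 1, and there the Hessian of J_k is bounded by Q + m(4k-2)A (Cauchy-Schwarz bounds its rank-one
   part m(k-1) g^(k-2) grad g grad g' by 4m(k-1) g^(k-1) A).  Hence, with d = p - x,
   <d, grad J_k(p) - grad J_k(x)> <= L_k |d|^2, so e = T p - T x satisfies <z, e> >= 0 when
   gamma L_k <= 1, and g(T x) = u'Au <= (u+e)'A(u+e) = g(T p) <= 1. *)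

section \<open>Symmetric matrices and quadratic forms\<close>

lemma inner_transpose_matrix_vector:
  fixes M :: "real^'n^'m"
  shows "x \<bullet> (transpose M *v y) = (M *v x) \<bullet> y"
  by (metis dot_lmul_matrix inner_commute transpose_matrix_vector)

lemma symmetric_inner_matrix_vector:
  fixes M :: "real^'n^'n"
  assumes "transpose M = M"
  shows "x \<bullet> (M *v y) = (M *v x) \<bullet> y"
  using inner_transpose_matrix_vector[of x M y] assms by simp

lemma quadratic_form_add:
  fixes A :: "real^'n^'n"
  assumes "transpose A = A"
  shows "(a + b) \<bullet> (A *v (a + b)) = a \<bullet> (A *v a) + 2 * (a \<bullet> (A *v b)) + b \<bullet> (A *v b)"
  using symmetric_inner_matrix_vector[OF assms, of b a]
  by (simp add: matrix_vector_right_distrib inner_add_left inner_add_right inner_commute)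

lemma quadratic_form_scaleR:
  fixes A :: "real^'n^'n"
  shows "(h *\<^sub>R b) \<bullet> (A *v (h *\<^sub>R b)) = h\<^sup>2 * (b \<bullet> (A *v b))"
  by (simp add: matrix_vector_mult_scaleR power2_eq_square)

lemma quadratic_form_add_scaleR_matrix:
  fixes Q A :: "real^'n^'n"
  shows "z \<bullet> ((Q + c *\<^sub>R A) *v z) = z \<bullet> (Q *v z) + c * (z \<bullet> (A *v z))"
  by (simp add: matrix_vector_mult_add_rdistrib scaleR_matrix_vector_assoc[symmetric] inner_add_right)

lemma sym_pd_imp_sym_psd: "sym_pd A \<Longrightarrow> sym_psd A"
  unfolding sym_pd_def sym_psd_def by (metis inner_zero_left order.refl order_less_imp_le)

lemma sym_psd_add_scaleR:
  assumes "sym_psd Q" and "sym_psd A" and "0 \<le> c"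
  shows "sym_psd (Q + c *\<^sub>R A)"
  using assms unfolding sym_psd_def quadratic_form_add_scaleR_matrix
  by (simp add: transpose_def vec_eq_iff)

lemma quadratic_form_add_ge:
  fixes A :: "real^'n^'n"
  assumes "sym_psd A"
  shows "u \<bullet> (A *v u) + 2 * ((A *v u) \<bullet> e) \<le> (u + e) \<bullet> (A *v (u + e))"
  using assms symmetric_inner_matrix_vector[of A u e]
  unfolding sym_psd_def by (simp add: quadratic_form_add)

lemma quadratic_form_cauchy_schwarz:
  fixes A :: "real^'n^'n"
  assumes "sym_pd A"
  shows "(y \<bullet> (A *v z))\<^sup>2 \<le> (y \<bullet> (A *v y)) * (z \<bullet> (A *v z))"
proof (cases "z = 0")
  case False
  have sym: "transpose A = A"
    using assms unfolding sym_pd_def by simp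
  define b c where "b = y \<bullet> (A *v z)" and "c = z \<bullet> (A *v z)"
  have "0 < c"
    using assms False unfolding sym_pd_def c_def by simp
  define t where "t = - b / c"
  have "0 \<le> (y + t *\<^sub>R z) \<bullet> (A *v (y + t *\<^sub>R z))"
    using assms sym_pd_imp_sym_psd unfolding sym_psd_def by blast
  also have "\<dots> = y \<bullet> (A *v y) + 2 * t * b + t\<^sup>2 * c"
    by (simp add: quadratic_form_add[OF sym] matrix_vector_mult_scaleR power2_eq_square b_def c_def)
  also have "\<dots> = y \<bullet> (A *v y) - b\<^sup>2 / c"
    using \<open>0 < c\<close> by (simp add: t_def field_simps power2_eq_square)
  finally show ?thesis
    using \<open>0 < c\<close> by (simp add: b_def c_def field_simps)
qed simp

section \<open>Eigenvalues and singular values of real matrices\<close>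

lemma eigenvector_of_max_quadratic_form:
  fixes B :: "real^'n^'n"
  assumes sym: "transpose B = B" and zz: "z \<bullet> z = 1"
    and bound: "\<And>w. w \<bullet> (B *v w) \<le> (z \<bullet> (B *v z)) * (w \<bullet> w)"
  shows "B *v z = (z \<bullet> (B *v z)) *\<^sub>R z"
proof -
  define l where "l = z \<bullet> (B *v z)"
  define e where "e = l *\<^sub>R z - B *v z"
  define K where "K = l * (e \<bullet> e) - e \<bullet> (B *v e)"
  \<comment> \<open>The defect l |w|^2 - w'Bw is nonnegative and vanishes at z; its derivative at z along e is 2 |e|^2.\<close>
  have defect_nonneg: "0 \<le> 2 * t * (e \<bullet> e) + t\<^sup>2 * K" for t
  proof -
    have "(z + t *\<^sub>R e) \<bullet> (B *v (z + t *\<^sub>R e))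
        = l + 2 * t * (e \<bullet> (B *v z)) + t\<^sup>2 * (e \<bullet> (B *v e))"
      using l_def symmetric_inner_matrix_vector[OF sym, of z e]
      by (simp add: quadratic_form_add[OF sym] matrix_vector_mult_scaleR power2_eq_square inner_commute)
    moreover have "(z + t *\<^sub>R e) \<bullet> (z + t *\<^sub>R e) = 1 + 2 * t * (e \<bullet> z) + t\<^sup>2 * (e \<bullet> e)"
      using zz by (simp add: inner_add_left inner_add_right inner_commute power2_eq_square)
    ultimately have "0 \<le> l * (1 + 2 * t * (e \<bullet> z) + t\<^sup>2 * (e \<bullet> e))
        - (l + 2 * t * (e \<bullet> (B *v z)) + t\<^sup>2 * (e \<bullet> (B *v e)))"
      using bound[of "z + t *\<^sub>R e"] l_def by simp
    also have "\<dots> = 2 * t * (l * (e \<bullet> z) - e \<bullet> (B *v z)) + t\<^sup>2 * K"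
      by (simp add: K_def algebra_simps)
    also have "l * (e \<bullet> z) - e \<bullet> (B *v z) = e \<bullet> e"
      by (simp add: e_def inner_diff_right)
    finally show ?thesis .
  qed
  have "((\<lambda>t. 2 * t * (e \<bullet> e) + t\<^sup>2 * K) has_real_derivative 2 * (e \<bullet> e)) (at 0)"
    by (auto intro!: derivative_eq_intros)
  then have "2 * (e \<bullet> e) = 0"
    by (rule DERIV_local_min[OF _ zero_less_one]) (simp add: defect_nonneg)
  then show ?thesis
    by (simp add: e_def l_def)
qed

lemma symmetric_max_eigenvalue:
  fixes B :: "real^'n^'n"
  assumes sym: "transpose B = B"
  obtains l z where "z \<noteq> 0" and "B *v z = l *\<^sub>R z" and "\<And>w. w \<bullet> (B *v w) \<le> l * (w \<bullet> w)"
proof -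
  have "sphere (0::real^'n) 1 \<noteq> {}"
    by simp
  moreover have "continuous_on (sphere 0 1) (\<lambda>w. w \<bullet> (B *v w))"
    by (intro continuous_intros linear_continuous_on matrix_vector_mul_bounded_linear)
  ultimately obtain z where "z \<in> sphere 0 1" and zmax: "\<forall>y\<in>sphere 0 1. y \<bullet> (B *v y) \<le> z \<bullet> (B *v z)"
    using continuous_attains_sup[OF compact_sphere] by blast
  then have zz: "z \<bullet> z = 1"
    by (simp add: dot_square_norm)
  have bound: "w \<bullet> (B *v w) \<le> (z \<bullet> (B *v z)) * (w \<bullet> w)" for w
  proof (cases "w = 0")
    case False
    then have "(w /\<^sub>R norm w) \<in> sphere 0 1"
      by simp
    then have "(inverse (norm w))\<^sup>2 * (w \<bullet> (B *v w)) \<le> z \<bullet> (B *v z)"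
      using zmax by (metis quadratic_form_scaleR)
    then have "w \<bullet> (B *v w) \<le> (z \<bullet> (B *v z)) * (norm w)\<^sup>2"
      using False by (simp add: field_simps)
    then show ?thesis
      by (simp add: power2_norm_eq_inner)
  qed simp
  moreover have "z \<noteq> 0"
    using zz by auto
  ultimately show thesis
    using that eigenvector_of_max_quadratic_form[OF sym zz bound] by blast
qed

lemma symmetric_min_eigenvalue:
  fixes B :: "real^'n^'n"
  assumes "transpose B = B"
  obtains l z where "z \<noteq> 0" and "B *v z = l *\<^sub>R z" and "\<And>w. l * (w \<bullet> w) \<le> w \<bullet> (B *v w)"
proof -
  have neg: "(-B) *v x = - (B *v x)" for x
    by (simp add: matrix_vector_mult_def vec_eq_iff sum_negf)
  have "transpose (-B) = -B"
    using assms by (simp add: transpose_def vec_eq_iff)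
  then obtain l z where "z \<noteq> 0" and Bz: "(-B) *v z = l *\<^sub>R z"
    and bound: "\<And>w. w \<bullet> ((-B) *v w) \<le> l * (w \<bullet> w)"
    using symmetric_max_eigenvalue by blast
  show thesis
  proof (rule that)
    show "z \<noteq> 0"
      by fact
    show "B *v z = (- l) *\<^sub>R z"
      using Bz neg[of z] by (metis minus_minus scaleR_minus_left)
    show "(- l) * (w \<bullet> w) \<le> w \<bullet> (B *v w)" for w
      using bound[of w] neg[of w] by simp
  qed
qed

lemma finite_mat_eigenvalues:
  fixes B :: "real^'n^'n"
  assumes sym: "transpose B = B"
  shows "finite (mat_eigenvalues B)"
proof -
  define f where "f l = (SOME x. x \<noteq> 0 \<and> B *v x = l *\<^sub>R x)" for l
  have f: "f l \<noteq> 0 \<and> B *v f l = l *\<^sub>R f l" if "l \<in> mat_eigenvalues B" for l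
    using someI_ex[of "\<lambda>x. x \<noteq> 0 \<and> B *v x = l *\<^sub>R x"] that
    unfolding mat_eigenvalues_def f_def by blast
  have inj: "inj_on f (mat_eigenvalues B)"
  proof (rule inj_onI)
    fix a b assume a: "a \<in> mat_eigenvalues B" and b: "b \<in> mat_eigenvalues B" and "f a = f b"
    then have "a *\<^sub>R f a = b *\<^sub>R f a"
      using f[OF a] f[OF b] by metis
    then show "a = b"
      using f[OF a] by simp
  qed
  have "pairwise orthogonal (f ` mat_eigenvalues B)"
  proof (rule pairwiseI)
    fix x y assume "x \<in> f ` mat_eigenvalues B" "y \<in> f ` mat_eigenvalues B" "x \<noteq> y"
    then obtain a b where a: "a \<in> mat_eigenvalues B" "x = f a"
      and b: "b \<in> mat_eigenvalues B" "y = f b"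
      by auto
    have "a * (f a \<bullet> f b) = f a \<bullet> (B *v f b)"
      using f[OF a(1)] symmetric_inner_matrix_vector[OF sym, of "f a" "f b"] by simp
    also have "\<dots> = b * (f a \<bullet> f b)"
      using f[OF b(1)] by simp
    finally have "(a - b) * (f a \<bullet> f b) = 0"
      by (simp add: algebra_simps)
    moreover have "a \<noteq> b"
      using a b \<open>x \<noteq> y\<close> by blast
    ultimately show "orthogonal x y"
      using a b by (simp add: orthogonal_def)
  qed
  moreover have "0 \<notin> f ` mat_eigenvalues B"
    using f by auto
  ultimately have "independent (f ` mat_eigenvalues B)"
    using pairwise_orthogonal_independent by blast
  then have "finite (f ` mat_eigenvalues B)"
    by (rule finiteI_independent)
  then show ?thesis
    using finite_imageD inj by blast
qed

lemma
  fixes B :: "real^'n^'n"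
  assumes sym: "transpose B = B"
  shows Max_mat_eigenvalues_in: "Max (mat_eigenvalues B) \<in> mat_eigenvalues B"
    and Min_mat_eigenvalues_in: "Min (mat_eigenvalues B) \<in> mat_eigenvalues B"
    and quadratic_form_le_Max_mat_eigenvalues: "w \<bullet> (B *v w) \<le> Max (mat_eigenvalues B) * (w \<bullet> w)"
    and Min_mat_eigenvalues_le_quadratic_form: "Min (mat_eigenvalues B) * (w \<bullet> w) \<le> w \<bullet> (B *v w)"
proof -
  note fin = finite_mat_eigenvalues[OF sym]
  obtain l z where "z \<noteq> 0" "B *v z = l *\<^sub>R z" and l: "\<And>w. w \<bullet> (B *v w) \<le> l * (w \<bullet> w)"
    using symmetric_max_eigenvalue[OF sym] by blast
  then have l_in: "l \<in> mat_eigenvalues B"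
    unfolding mat_eigenvalues_def by blast
  then have ne: "mat_eigenvalues B \<noteq> {}"
    by blast
  show "Max (mat_eigenvalues B) \<in> mat_eigenvalues B"
    and "Min (mat_eigenvalues B) \<in> mat_eigenvalues B"
    using Max_in[OF fin ne] Min_in[OF fin ne] .
  have "l * (w \<bullet> w) \<le> Max (mat_eigenvalues B) * (w \<bullet> w)"
    using fin l_in by (intro mult_right_mono) simp_all
  then show "w \<bullet> (B *v w) \<le> Max (mat_eigenvalues B) * (w \<bullet> w)"
    using l[of w] by linarith
  obtain l' z' where "z' \<noteq> 0" "B *v z' = l' *\<^sub>R z'" and l': "\<And>w. l' * (w \<bullet> w) \<le> w \<bullet> (B *v w)"
    using symmetric_min_eigenvalue[OF sym] by blast
  then have "l' \<in> mat_eigenvalues B"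
    unfolding mat_eigenvalues_def by blast
  then have "Min (mat_eigenvalues B) * (w \<bullet> w) \<le> l' * (w \<bullet> w)"
    using fin by (intro mult_right_mono) simp_all
  then show "Min (mat_eigenvalues B) * (w \<bullet> w) \<le> w \<bullet> (B *v w)"
    using l'[of w] by linarith
qed

lemma inner_transpose_mult_self:
  fixes M :: "real^'n^'m"
  shows "w \<bullet> ((transpose M ** M) *v w) = (M *v w) \<bullet> (M *v w)"
  by (simp only: matrix_vector_mul_assoc[symmetric] inner_transpose_matrix_vector)

lemma symmetric_transpose_mult_self:
  fixes M :: "real^'n^'m"
  shows "transpose (transpose M ** M) = transpose M ** M"
  by (simp add: matrix_transpose_mul)

lemma mat_eigenvalues_transpose_mult_self_nonneg:
  fixes M :: "real^'n^'m"
  assumes "l \<in> mat_eigenvalues (transpose M ** M)"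
  shows "0 \<le> l"
proof -
  obtain z where "z \<noteq> 0" and z: "(transpose M ** M) *v z = l *\<^sub>R z"
    using assms unfolding mat_eigenvalues_def by auto
  have "0 \<le> (M *v z) \<bullet> (M *v z)"
    by simp
  also have "\<dots> = l * (z \<bullet> z)"
    using inner_transpose_mult_self[of z M] z by simp
  finally have "0 \<le> l * (z \<bullet> z)" .
  moreover have "0 < z \<bullet> z"
    using \<open>z \<noteq> 0\<close> by simp
  ultimately show ?thesis
    by (simp add: zero_le_mult_iff)
qed

lemma
  fixes M :: "real^'n^'n"
  shows sigma_max_nonneg: "0 \<le> sigma_max M"
    and sigma_min_nonneg: "0 \<le> sigma_min M"
    and sigma_max_squared: "(sigma_max M)\<^sup>2 = Max (mat_eigenvalues (transpose M ** M))"
    and sigma_min_squared: "(sigma_min M)\<^sup>2 = Min (mat_eigenvalues (transpose M ** M))"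
  using mat_eigenvalues_transpose_mult_self_nonneg[OF Max_mat_eigenvalues_in[OF symmetric_transpose_mult_self]]
    mat_eigenvalues_transpose_mult_self_nonneg[OF Min_mat_eigenvalues_in[OF symmetric_transpose_mult_self]]
  unfolding sigma_max_def sigma_min_def by simp_all

lemma norm_matrix_vector_le_sigma_max: "norm (M *v w) \<le> sigma_max M * norm w"
proof (rule power2_le_imp_le)
  have "(norm (M *v w))\<^sup>2 = w \<bullet> ((transpose M ** M) *v w)"
    by (simp add: inner_transpose_mult_self power2_norm_eq_inner)
  also have "\<dots> \<le> (sigma_max M)\<^sup>2 * (w \<bullet> w)"
    unfolding sigma_max_squared
    by (rule quadratic_form_le_Max_mat_eigenvalues[OF symmetric_transpose_mult_self])
  finally show "(norm (M *v w))\<^sup>2 \<le> (sigma_max M * norm w)\<^sup>2"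
    by (simp add: power_mult_distrib power2_norm_eq_inner)
qed (simp add: sigma_max_nonneg)

lemma sigma_min_le_norm_matrix_vector: "sigma_min M * norm w \<le> norm (M *v w)"
proof (rule power2_le_imp_le)
  have "(sigma_min M * norm w)\<^sup>2 = (sigma_min M)\<^sup>2 * (w \<bullet> w)"
    by (simp add: power_mult_distrib power2_norm_eq_inner)
  also have "\<dots> \<le> w \<bullet> ((transpose M ** M) *v w)"
    unfolding sigma_min_squared
    by (rule Min_mat_eigenvalues_le_quadratic_form[OF symmetric_transpose_mult_self])
  finally show "(sigma_min M * norm w)\<^sup>2 \<le> (norm (M *v w))\<^sup>2"
    by (simp add: inner_transpose_mult_self power2_norm_eq_inner)
qed simp

lemma quadratic_form_le_sigma_max: "w \<bullet> (M *v w) \<le> sigma_max M * (w \<bullet> w)"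
proof -
  have "w \<bullet> (M *v w) \<le> norm w * (sigma_max M * norm w)"
    using norm_cauchy_schwarz[of w "M *v w"] norm_matrix_vector_le_sigma_max[of M w]
    by (meson mult_left_mono norm_ge_zero order_trans)
  then show ?thesis
    by (simp add: power2_norm_eq_inner[symmetric] power2_eq_square algebra_simps)
qed

lemma sqrt_sigma_min_le_norm_matrix_vector:
  fixes A :: "real^'n^'n"
  assumes "y \<bullet> (A *v y) = 1"
  shows "sqrt (sigma_min A) \<le> norm (A *v y)"
proof (rule real_le_lsqrt)
  have "1 \<le> norm y * norm (A *v y)"
    using assms norm_cauchy_schwarz[of y "A *v y"] by simp
  then have "sigma_min A \<le> sigma_min A * (norm y * norm (A *v y))"
    using sigma_min_nonneg[of A] by (simp add: mult_le_cancel_left1)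
  also have "\<dots> = (sigma_min A * norm y) * norm (A *v y)"
    by simp
  also have "\<dots> \<le> norm (A *v y) * norm (A *v y)"
    using sigma_min_le_norm_matrix_vector[of A y] by (simp add: mult_right_mono)
  finally show "sigma_min A \<le> (norm (A *v y))\<^sup>2"
    by (simp add: power2_eq_square)
qed simp

lemma sigma_max_attained:
  fixes M :: "real^'n^'n"
  assumes "sym_psd M"
  shows "\<exists>y. y \<noteq> 0 \<and> y \<bullet> (M *v y) = sigma_max M * (y \<bullet> y)"
proof -
  have sym: "transpose M = M" and psd: "\<And>x. 0 \<le> x \<bullet> (M *v x)"
    using assms unfolding sym_psd_def by auto
  define t where "t = sigma_max M"
  obtain z where "z \<noteq> 0" and "(transpose M ** M) *v z = t\<^sup>2 *\<^sub>R z"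
    using Max_mat_eigenvalues_in[OF symmetric_transpose_mult_self, of M]
    unfolding mat_eigenvalues_def t_def sigma_max_squared by auto
  then have MMz: "M *v (M *v z) = t\<^sup>2 *\<^sub>R z"
    by (simp add: sym matrix_vector_mul_assoc)
  \<comment> \<open>M z + t z is an eigenvector of M itself, for the eigenvalue t.\<close>
  define y where "y = M *v z + t *\<^sub>R z"
  have My: "M *v y = t *\<^sub>R y"
    unfolding y_def using MMz
    by (simp add: matrix_vector_right_distrib matrix_vector_mult_scaleR power2_eq_square scaleR_add_right)
  show ?thesis
  proof (cases "y = 0")
    case True
    then have Mz: "M *v z = - t *\<^sub>R z"
      unfolding y_def by (simp add: add_eq_0_iff2)
    have "0 \<le> - t * (z \<bullet> z)"
      using psd[of z] Mz by simp
    moreover have "0 < z \<bullet> z"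
      using \<open>z \<noteq> 0\<close> by simp
    ultimately have "t = 0"
      using sigma_max_nonneg[of M] t_def by (simp add: mult_le_0_iff)
    then show ?thesis
      using \<open>z \<noteq> 0\<close> Mz t_def by auto
  next
    case False
    then show ?thesis
      using My t_def by auto
  qed
qed

lemma sigma_max_mono:
  fixes M N :: "real^'n^'n"
  assumes "sym_psd M" and "\<And>z. z \<bullet> (M *v z) \<le> z \<bullet> (N *v z)"
  shows "sigma_max M \<le> sigma_max N"
proof -
  obtain y where "y \<noteq> 0" and y: "y \<bullet> (M *v y) = sigma_max M * (y \<bullet> y)"
    using sigma_max_attained[OF assms(1)] by blast
  have "sigma_max M * (y \<bullet> y) \<le> sigma_max N * (y \<bullet> y)"
    using assms(2)[of y] quadratic_form_le_sigma_max[of y N] y by linarith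
  then show ?thesis
    using \<open>y \<noteq> 0\<close> by simp
qed

section \<open>Estimates for a real quadratic on an interval\<close>

lemma quadratic_first_exit:
  fixes s b c :: real
  assumes "s < 1" and "0 < c"
  obtains h where "0 < h" and "s + 2 * h * b + h\<^sup>2 * c = 1"
    and "\<And>t. 0 \<le> t \<Longrightarrow> t \<le> h \<Longrightarrow> s + 2 * t * b + t\<^sup>2 * c \<le> 1"
proof -
  define R where "R = sqrt (b\<^sup>2 + c * (1 - s))"
  have R2: "R\<^sup>2 = b\<^sup>2 + c * (1 - s)"
    unfolding R_def using assms by simp
  have "\<bar>b\<bar> < R"
    unfolding R_def using assms by (intro real_less_rsqrt) simp
  define h' h where "h' = (- b - R) / c" and "h = (- b + R) / c"
  have factor: "s + 2 * t * b + t\<^sup>2 * c - 1 = c * (t - h') * (t - h)" for t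
    using \<open>0 < c\<close> R2 unfolding h'_def h_def by (simp add: field_simps power2_eq_square) algebra
  show thesis
  proof (rule that)
    show "0 < h"
      unfolding h_def using \<open>\<bar>b\<bar> < R\<close> \<open>0 < c\<close> by simp
    show "s + 2 * h * b + h\<^sup>2 * c = 1"
      using factor[of h] by simp
    fix t assume "0 \<le> t" "t \<le> h"
    moreover have "h' < 0"
      unfolding h'_def using \<open>\<bar>b\<bar> < R\<close> \<open>0 < c\<close> by (simp add: divide_neg_pos)
    ultimately have "c * (t - h') * (t - h) \<le> 0"
      using \<open>0 < c\<close> by (intro mult_nonneg_nonpos) simp_all
    then show "s + 2 * t * b + t\<^sup>2 * c \<le> 1"
      using factor[of t] by simp
  qed
qed

text \<open>With S t = g(p + t d) this bounds the increment of the penalty part of the gradient of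
  J_(j+1) along d; it is the source of the factor 4k - 2 in L_k.\<close>

lemma power_mult_affine_increment_le:
  fixes s b c :: real and j :: nat
  defines "S \<equiv> \<lambda>t. s + 2 * t * b + t\<^sup>2 * c"
  assumes "0 \<le> c"
    and S: "\<And>t. 0 \<le> t \<Longrightarrow> t \<le> 1 \<Longrightarrow> 0 \<le> S t \<and> S t \<le> 1 \<and> (b + t * c)\<^sup>2 \<le> S t * c"
  shows "S 1 ^ j * (b + c) - s ^ j * b \<le> (2 * j + 1) * c"
proof -
  define f where "f t = (2 * j + 1) * c * t - S t ^ j * (b + t * c)" for t
  define f' where "f' t = (2 * j + 1) * c
      - (2 * (j * S t ^ (j - 1)) * (b + t * c)\<^sup>2 + S t ^ j * c)" for t
  have "(f has_real_derivative f' t) (at t)" for t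
    unfolding f_def f'_def S_def
    by (auto intro!: derivative_eq_intros simp: power2_eq_square algebra_simps)
  moreover have "0 \<le> f' t" if "0 \<le> t" "t \<le> 1" for t
  proof -
    have "0 \<le> S t" "S t \<le> 1" "(b + t * c)\<^sup>2 \<le> S t * c"
      using S[OF that] by auto
    have "2 * (j * S t ^ (j - 1)) * (b + t * c)\<^sup>2 \<le> 2 * (j * S t ^ (j - 1)) * (S t * c)"
      using \<open>0 \<le> S t\<close> \<open>(b + t * c)\<^sup>2 \<le> S t * c\<close> by (intro mult_left_mono) simp_all
    also have "\<dots> = 2 * j * (S t ^ j * c)"
      by (cases j) simp_all
    also have "\<dots> \<le> 2 * j * c"
      using \<open>0 \<le> S t\<close> \<open>S t \<le> 1\<close> \<open>0 \<le> c\<close>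
      by (intro mult_left_mono mult_left_le_one_le power_le_one) simp_all
    moreover have "S t ^ j * c \<le> c"
      using \<open>0 \<le> S t\<close> \<open>S t \<le> 1\<close> \<open>0 \<le> c\<close> by (intro mult_left_le_one_le power_le_one) simp_all
    ultimately show ?thesis
      unfolding f'_def by (simp add: algebra_simps)
  qed
  ultimately have "f 0 \<le> f 1"
    by (intro deriv_nonneg_imp_mono[of 0 1 f f']) simp_all
  then show ?thesis
    unfolding f_def S_def by (simp add: algebra_simps)
qed

section \<open>Invariance of the ellipsoid under the gradient step\<close>

lemma gcon_add:
  assumes "transpose A = A"
  shows "gcon A v (x + d) = gcon A v x + d \<bullet> grad_g A v x + d \<bullet> (A *v d)"
proof -
  have "gcon A v (x + d) = ((x - v) + d) \<bullet> (A *v ((x - v) + d))"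
    unfolding gcon_def by (simp add: algebra_simps)
  then show ?thesis
    unfolding gcon_def grad_g_def quadratic_form_add[OF assms]
    using symmetric_inner_matrix_vector[OF assms, of "x - v" d] by (simp add: inner_commute)
qed

lemma gcon_add_scaleR:
  assumes "transpose A = A"
  shows "gcon A v (x + t *\<^sub>R d) = gcon A v x + 2 * t * ((x - v) \<bullet> (A *v d)) + t\<^sup>2 * (d \<bullet> (A *v d))"
  using gcon_add[OF assms, of v x "t *\<^sub>R d"] symmetric_inner_matrix_vector[OF assms, of d "x - v"]
  unfolding quadratic_form_scaleR grad_g_def by (simp add: inner_commute)

lemma Lk_nonneg: "0 \<le> Lk Q A m k"
  unfolding Lk_def by (rule sigma_max_nonneg)

lemma Lk_mono:
  fixes Q A :: "real^'n^'n"
  assumes "sym_psd Q" and "sym_psd A" and "0 \<le> m" and "1 \<le> k" and "k \<le> k'"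
  shows "Lk Q A m k \<le> Lk Q A m k'"
  unfolding Lk_def
proof (rule sigma_max_mono)
  show "sym_psd (Q + (m * (4 * real k - 2)) *\<^sub>R A)"
    using assms by (intro sym_psd_add_scaleR) auto
  fix z :: "real^'n"
  have "m * (4 * real k - 2) * (z \<bullet> (A *v z)) \<le> m * (4 * real k' - 2) * (z \<bullet> (A *v z))"
    using assms unfolding sym_psd_def by (intro mult_right_mono mult_left_mono) auto
  then show "z \<bullet> ((Q + (m * (4 * real k - 2)) *\<^sub>R A) *v z)
      \<le> z \<bullet> ((Q + (m * (4 * real k' - 2)) *\<^sub>R A) *v z)"
    by (simp add: quadratic_form_add_scaleR_matrix)
qed

lemma rA_nonneg: "0 \<le> rA A"
  unfolding rA_def by (intro divide_nonneg_nonneg real_sqrt_ge_zero sigma_max_nonneg sigma_min_nonneg)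

lemma sigma_max_mult_rA_le: "sigma_max A * rA A \<le> sqrt (sigma_min A)"
  unfolding rA_def using sigma_min_nonneg[of A] by (cases "sigma_max A = 0") simp_all

lemma norm_grad_g_on_boundary:
  fixes A :: "real^'n^'n"
  assumes "gcon A v x = 1"
  shows "0 < norm (grad_g A v x)" and "2 * sqrt (sigma_min A) \<le> norm (grad_g A v x)"
proof -
  have yAy: "(x - v) \<bullet> (A *v (x - v)) = 1"
    using assms unfolding gcon_def .
  then have "A *v (x - v) \<noteq> 0"
    by auto
  then show "0 < norm (grad_g A v x)"
    unfolding grad_g_def by simp
  show "2 * sqrt (sigma_min A) \<le> norm (grad_g A v x)"
    using sqrt_sigma_min_le_norm_matrix_vector[OF yAy] unfolding grad_g_def by simp
qed

lemma requirement2_inner_nonneg: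
  fixes Q A :: "real^'n^'n" and q v x :: "real^'n" and m :: real
  defines "w \<equiv> grad_f Q q x + m *\<^sub>R grad_g A v x"
  assumes "requirement2 Q q A v m" and "gcon A v x = 1"
  shows "0 \<le> w \<bullet> grad_g A v x"
proof (rule ccontr)
  assume "\<not> 0 \<le> w \<bullet> grad_g A v x"
  moreover have "0 \<le> rA A * Lk Q A m 1"
    by (intro mult_nonneg_nonneg rA_nonneg Lk_nonneg)
  ultimately have "rA A * Lk Q A m 1 * (w \<bullet> grad_g A v x) \<le> 0"
    by (simp add: mult_nonneg_nonpos)
  moreover have "(norm w)\<^sup>2 * norm (grad_g A v x) \<le> 2 * rA A * Lk Q A m 1 * (w \<bullet> grad_g A v x)"
    using assms(2,3) unfolding requirement2_def w_def Let_def by auto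
  ultimately have "(norm w)\<^sup>2 * norm (grad_g A v x) \<le> 0"
    by (simp add: mult.assoc)
  then have "w = 0"
    using norm_grad_g_on_boundary(1)[OF assms(3)] by (simp add: mult_le_0_iff)
  then show False
    using \<open>\<not> 0 \<le> w \<bullet> grad_g A v x\<close> by simp
qed

lemma requirement2_step_bound:
  fixes Q A :: "real^'n^'n" and q v x :: "real^'n" and m \<gamma> :: real
  defines "w \<equiv> grad_f Q q x + m *\<^sub>R grad_g A v x" and "G \<equiv> grad_g A v x"
  assumes "requirement2 Q q A v m" and "gcon A v x = 1"
    and "0 \<le> \<gamma>" and "\<gamma> * Lk Q A m 1 \<le> 1"
  shows "\<gamma> * (w \<bullet> (A *v w)) \<le> w \<bullet> G"
proof -
  have wG: "0 \<le> w \<bullet> G"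
    using requirement2_inner_nonneg[OF assms(3,4)] unfolding w_def G_def .
  have req: "(norm w)\<^sup>2 * norm G \<le> 2 * rA A * Lk Q A m 1 * (w \<bullet> G)"
    using assms(3,4) unfolding requirement2_def w_def G_def Let_def by auto
  have "\<gamma> * (w \<bullet> (A *v w)) * norm G \<le> \<gamma> * sigma_max A * ((norm w)\<^sup>2 * norm G)"
    using mult_left_mono[OF quadratic_form_le_sigma_max[of w A], of "\<gamma> * norm G"] assms(5)
    by (simp add: power2_norm_eq_inner algebra_simps)
  also have "\<dots> \<le> \<gamma> * sigma_max A * (2 * rA A * Lk Q A m 1 * (w \<bullet> G))"
    using assms(5) sigma_max_nonneg[of A] by (intro mult_left_mono[OF req]) simp
  also have "\<dots> = (\<gamma> * Lk Q A m 1) * (2 * (sigma_max A * rA A) * (w \<bullet> G))"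
    by (simp add: algebra_simps)
  also have "\<dots> \<le> 2 * (sigma_max A * rA A) * (w \<bullet> G)"
    using assms(5,6) wG sigma_max_nonneg[of A]
    by (intro mult_left_le_one_le mult_nonneg_nonneg Lk_nonneg rA_nonneg) simp_all
  also have "\<dots> \<le> 2 * sqrt (sigma_min A) * (w \<bullet> G)"
    using sigma_max_mult_rA_le wG by (intro mult_right_mono) simp_all
  also have "\<dots> \<le> norm G * (w \<bullet> G)"
    using norm_grad_g_on_boundary(2)[OF assms(4)] wG unfolding G_def by (intro mult_right_mono)
  finally show ?thesis
    using norm_grad_g_on_boundary(1)[OF assms(4)] unfolding G_def by (simp add: mult.commute)
qed

lemma gcon_step_le_one_on_boundary:
  fixes A :: "real^'n^'n"
  assumes "transpose A = A" and "requirement2 Q q A v m"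
    and "0 \<le> \<gamma>" and "\<gamma> * Lk Q A m 1 \<le> 1" and "gcon A v x = 1"
  shows "gcon A v (x - \<gamma> *\<^sub>R grad_Jk Q q A v m k x) \<le> 1"
proof -
  define w where "w = grad_f Q q x + m *\<^sub>R grad_g A v x"
  have "gcon A v (x + (- \<gamma>) *\<^sub>R w)
      = gcon A v x + ((- \<gamma>) *\<^sub>R w) \<bullet> grad_g A v x
        + ((- \<gamma>) *\<^sub>R w) \<bullet> (A *v ((- \<gamma>) *\<^sub>R w))"
    by (rule gcon_add[OF assms(1)])
  also have "\<dots> = 1 - \<gamma> * (w \<bullet> grad_g A v x - \<gamma> * (w \<bullet> (A *v w)))"
    unfolding quadratic_form_scaleR using assms(5) by (simp add: algebra_simps power2_eq_square)
  also have "\<dots> \<le> 1"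
    using requirement2_step_bound[OF assms(2,5,3,4)] assms(3) unfolding w_def by simp
  finally show ?thesis
    using assms(5) unfolding grad_Jk_def w_def by simp
qed

lemma grad_Jk_increment_le:
  fixes Q A :: "real^'n^'n" and q v p d :: "real^'n"
  assumes "sym_pd A" and "0 \<le> m" and "1 \<le> k"
    and segment: "\<And>t. 0 \<le> t \<Longrightarrow> t \<le> 1 \<Longrightarrow> gcon A v (p + t *\<^sub>R d) \<le> 1"
  shows "d \<bullet> (grad_Jk Q q A v m k (p + d) - grad_Jk Q q A v m k p)
    \<le> d \<bullet> ((Q + (m * (4 * real k - 2)) *\<^sub>R A) *v d)"
proof -
  have sym: "transpose A = A" and psd: "\<And>x. 0 \<le> x \<bullet> (A *v x)"
    using sym_pd_imp_sym_psd[OF assms(1)] unfolding sym_psd_def by auto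
  define y where "y = p - v"
  define s b c where "s = gcon A v p" and "b = y \<bullet> (A *v d)" and "c = d \<bullet> (A *v d)"
  define S where "S t = s + 2 * t * b + t\<^sup>2 * c" for t
  have dAy: "d \<bullet> (A *v y) = b"
    unfolding b_def using symmetric_inner_matrix_vector[OF sym, of d y] by (simp add: inner_commute)
  have gcon_S: "gcon A v (p + t *\<^sub>R d) = S t" for t
    unfolding gcon_add_scaleR[OF sym] S_def s_def b_def c_def y_def ..
  have "0 \<le> S t \<and> S t \<le> 1 \<and> (b + t * c)\<^sup>2 \<le> S t * c" if "0 \<le> t" "t \<le> 1" for t
  proof -
    have "S t = (y + t *\<^sub>R d) \<bullet> (A *v (y + t *\<^sub>R d))"
      using gcon_S[of t] unfolding gcon_def y_def by (simp add: algebra_simps)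
    moreover have "b + t * c = (y + t *\<^sub>R d) \<bullet> (A *v d)"
      unfolding b_def c_def by (simp add: inner_add_left)
    ultimately show ?thesis
      using psd segment[OF that] gcon_S[of t] quadratic_form_cauchy_schwarz[OF assms(1)]
      unfolding c_def by metis
  qed
  then have increment: "S 1 ^ (k - 1) * (b + c) - s ^ (k - 1) * b \<le> (2 * real (k - 1) + 1) * c"
    using power_mult_affine_increment_le[of c s b "k - 1"] psd[of d]
    unfolding S_def c_def by (simp add: add.commute)
  have grad: "d \<bullet> grad_Jk Q q A v m k (p + t *\<^sub>R d)
      = d \<bullet> (Q *v p) + t * (d \<bullet> (Q *v d)) + d \<bullet> q + 2 * m * (S t ^ (k - 1) * (b + t * c))" for t
    using gcon_S[of t] dAy
    by (simp add: grad_Jk_def grad_f_def grad_g_def y_def c_def matrix_vector_right_distrib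
        matrix_vector_mult_scaleR inner_add_right algebra_simps)
  have "d \<bullet> (grad_Jk Q q A v m k (p + d) - grad_Jk Q q A v m k p)
      = d \<bullet> (Q *v d) + 2 * m * (S 1 ^ (k - 1) * (b + c) - s ^ (k - 1) * b)"
    using grad[of 1] grad[of 0] by (simp add: inner_diff_right S_def algebra_simps)
  also have "\<dots> \<le> d \<bullet> (Q *v d) + 2 * m * ((2 * real (k - 1) + 1) * c)"
    using increment \<open>0 \<le> m\<close> by (intro add_left_mono mult_left_mono) simp_all
  also have "\<dots> = d \<bullet> ((Q + (m * (4 * real k - 2)) *\<^sub>R A) *v d)"
    using \<open>1 \<le> k\<close> unfolding quadratic_form_add_scaleR_matrix c_def by (simp add: algebra_simps of_nat_diff)
  finally show ?thesis .
qed

lemma gcon_step_le_along_direction: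
  fixes Q A :: "real^'n^'n" and q v x :: "real^'n" and m \<gamma> h :: real and k :: nat
  defines "T \<equiv> \<lambda>p. p - \<gamma> *\<^sub>R grad_Jk Q q A v m k p"
  defines "z \<equiv> A *v (T x - v)"
  assumes "sym_pd A" and "0 \<le> m" and "1 \<le> k" and "0 \<le> \<gamma>" and "\<gamma> * Lk Q A m k \<le> 1"
    and "0 < h" and inside: "\<And>t. 0 \<le> t \<Longrightarrow> t \<le> h \<Longrightarrow> gcon A v (x + t *\<^sub>R z) \<le> 1"
  shows "gcon A v (T x) \<le> gcon A v (T (x + h *\<^sub>R z))"
proof -
  define d where "d = h *\<^sub>R z"
  define e where "e = T (x + d) - T x"
  have "d \<bullet> (grad_Jk Q q A v m k (x + d) - grad_Jk Q q A v m k x)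
      \<le> d \<bullet> ((Q + (m * (4 * real k - 2)) *\<^sub>R A) *v d)"
    using \<open>0 < h\<close> by (intro grad_Jk_increment_le assms(3-5))
      (simp add: d_def inside mult_le_cancel_right1)
  also have "\<dots> \<le> Lk Q A m k * (d \<bullet> d)"
    unfolding Lk_def by (rule quadratic_form_le_sigma_max)
  finally have "\<gamma> * (d \<bullet> (grad_Jk Q q A v m k (x + d) - grad_Jk Q q A v m k x))
      \<le> \<gamma> * (Lk Q A m k * (d \<bullet> d))"
    using assms(6) by (rule mult_left_mono)
  also have "\<dots> = (\<gamma> * Lk Q A m k) * (d \<bullet> d)"
    by simp
  also have "\<dots> \<le> d \<bullet> d"
    using assms(6,7) by (intro mult_left_le_one_le mult_nonneg_nonneg Lk_nonneg) simp_all
  finally have "0 \<le> d \<bullet> e"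
    unfolding e_def T_def by (simp add: inner_diff_right algebra_simps)
  then have "0 \<le> z \<bullet> e"
    using \<open>0 < h\<close> unfolding d_def by (simp add: zero_le_mult_iff)
  then show ?thesis
    using quadratic_form_add_ge[OF sym_pd_imp_sym_psd[OF assms(3)], of "T x - v" e]
    unfolding gcon_def z_def e_def d_def by (simp add: algebra_simps)
qed

lemma gcon_step_le_one_from_boundary:
  fixes Q A :: "real^'n^'n" and q v x :: "real^'n"
  assumes "sym_pd A" and "0 \<le> m" and "1 \<le> k" and "0 \<le> \<gamma>" and "\<gamma> * Lk Q A m k \<le> 1"
    and boundary: "\<And>p. gcon A v p = 1 \<Longrightarrow> gcon A v (p - \<gamma> *\<^sub>R grad_Jk Q q A v m k p) \<le> 1"
    and "gcon A v x \<le> 1"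
  shows "gcon A v (x - \<gamma> *\<^sub>R grad_Jk Q q A v m k x) \<le> 1"
proof (cases "gcon A v x = 1")
  case False
  then have interior: "gcon A v x < 1"
    using assms(7) by simp
  have sym: "transpose A = A"
    using assms(1) unfolding sym_pd_def by simp
  define z where "z = A *v (x - \<gamma> *\<^sub>R grad_Jk Q q A v m k x - v)"
  show ?thesis
  proof (cases "z = 0")
    case True
    then show ?thesis
      unfolding gcon_def z_def by simp
  next
    case False
    then have "0 < z \<bullet> (A *v z)"
      using assms(1) unfolding sym_pd_def by simp
    then obtain h where "0 < h" and on_boundary: "gcon A v (x + h *\<^sub>R z) = 1"
      and inside: "\<And>t. 0 \<le> t \<Longrightarrow> t \<le> h \<Longrightarrow> gcon A v (x + t *\<^sub>R z) \<le> 1"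
      using quadratic_first_exit[OF interior, of "z \<bullet> (A *v z)" "(x - v) \<bullet> (A *v z)"]
      unfolding gcon_add_scaleR[OF sym] by blast
    have "gcon A v (x - \<gamma> *\<^sub>R grad_Jk Q q A v m k x)
        \<le> gcon A v (x + h *\<^sub>R z - \<gamma> *\<^sub>R grad_Jk Q q A v m k (x + h *\<^sub>R z))"
      using gcon_step_le_along_direction[OF assms(1-5) \<open>0 < h\<close>] inside unfolding z_def by blast
    also have "\<dots> \<le> 1"
      by (rule boundary[OF on_boundary])
    finally show ?thesis .
  qed
qed (use boundary in blast)

theorem proposition2:
  fixes Q A :: "real^'n^'n" and q v x :: "real^'n" and m \<gamma> :: real and k :: nat
  assumes "sym_psd Q" and "sym_pd A"
    and "m > 0" and "requirement2 Q q A v m"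
    and "k \<ge> 1"
    and "0 < \<gamma>" and "\<gamma> \<le> 1 / Lk Q A m k"
    and "gcon A v x \<le> 1"
  shows "gcon A v (x - \<gamma> *\<^sub>R grad_Jk Q q A v m k x) \<le> 1"
proof -
  have "0 < Lk Q A m k"
    using assms(6,7) Lk_nonneg[of Q A m k] by (cases "Lk Q A m k = 0") auto
  then have step_k: "\<gamma> * Lk Q A m k \<le> 1"
    using assms(7) by (simp add: le_divide_eq mult.commute)
  have "Lk Q A m 1 \<le> Lk Q A m k"
    using assms(1,3,5) sym_pd_imp_sym_psd[OF assms(2)] by (intro Lk_mono) auto
  then have step_1: "\<gamma> * Lk Q A m 1 \<le> 1"
    using step_k assms(6) by (meson less_imp_le mult_left_mono order_trans)
  have "transpose A = A"
    using assms(2) unfolding sym_pd_def by simp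
  have boundary: "gcon A v (p - \<gamma> *\<^sub>R grad_Jk Q q A v m k p) \<le> 1" if "gcon A v p = 1" for p
    using gcon_step_le_one_on_boundary[OF \<open>transpose A = A\<close> assms(4) _ step_1 that] assms(6)
    by simp
  show ?thesis
    using gcon_step_le_one_from_boundary[OF assms(2) _ assms(5) _ step_k boundary assms(8)] assms(3,6)
    by simp
qed

end
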